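(* Let $\mathbf P=UV^\top$ be an ergodic transition matrix on $\{1,\dots,p\}$ with stationary distribution $\pi$, where $U,V\in\mathbb R^{p\times r}$ are entrywise nonnegative with $U\mathbf 1_r=\mathbf 1_p$, $V^\top\mathbf 1_p=\mathbf 1_r$. Suppose there are constants $c_1,C_1,c_2>0$ with $c_1p^{-1}\le\pi_j\le C_1p^{-1}$ for all $j$, $\lambda_{\min}(U^\top[\mathrm{diag}(\pi)]^2U)\ge c_2p^{-1}r^{-1}$ and $\lambda_{\min}(V^\top[\mathrm{diag}(\pi)]^{-1}V)\ge c_2r$. Let $\sigma_1\ge\dots\ge\sigma_r$ be the $r$ largest singular values of $\mathbf Q=\mathrm{diag}(\pi)\mathbf P[\mathrm{diag}(\pi)]^{-1/2}$. Then $$c_2p^{-1/2}\le\sigma_r\le\sigma_1\le C_1c_1^{-1/2}p^{-1/2}.$$ *)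

theory Defs
  imports "Jordan_Normal_Form.Char_Poly" "HOL-Computational_Algebra.Polynomial"
begin

text \<open>Finite Markov chains on states 0..p-1 given by a p x p matrix.\<close>

definition stochastic_mat :: "nat \<Rightarrow> real mat \<Rightarrow> bool" where
  "stochastic_mat p P \<longleftrightarrow> P \<in> carrier_mat p p \<and>
     (\<forall>i<p. \<forall>j<p. P $$ (i,j) \<ge> 0) \<and> (\<forall>i<p. (\<Sum>j<p. P $$ (i,j)) = 1)"

definition irreducible_chain :: "nat \<Rightarrow> real mat \<Rightarrow> bool" where
  "irreducible_chain p P \<longleftrightarrow> (\<forall>i<p. \<forall>j<p. \<exists>n. (P ^\<^sub>m n) $$ (i,j) > 0)"

definition period :: "real mat \<Rightarrow> nat \<Rightarrow> nat" where
  "period P i = Gcd {n. n > 0 \<and> (P ^\<^sub>m n) $$ (i,i) > 0}"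

definition aperiodic_chain :: "nat \<Rightarrow> real mat \<Rightarrow> bool" where
  "aperiodic_chain p P \<longleftrightarrow> (\<forall>i<p. period P i = 1)"

definition ergodic_chain :: "nat \<Rightarrow> real mat \<Rightarrow> bool" where
  "ergodic_chain p P \<longleftrightarrow> stochastic_mat p P \<and> irreducible_chain p P \<and> aperiodic_chain p P"

definition stationary_dist :: "nat \<Rightarrow> real mat \<Rightarrow> (nat \<Rightarrow> real) \<Rightarrow> bool" where
  "stationary_dist p P \<pi> \<longleftrightarrow> (\<forall>i<p. \<pi> i \<ge> 0) \<and> (\<Sum>i<p. \<pi> i) = 1 \<and>
     (\<forall>j<p. (\<Sum>i<p. \<pi> i * P $$ (i,j)) = \<pi> j)"

definition lambda_min :: "real mat \<Rightarrow> real" where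
  "lambda_min A = Min {x. eigenvalue A x}"

text \<open>Singular values of a real matrix Q, in non-increasing order, with multiplicity:
  square roots of the eigenvalues (roots of the characteristic polynomial) of Q^T Q.
  sing_val Q k is the k-th largest singular value (k starting at 1).\<close>
definition sing_vals :: "real mat \<Rightarrow> real list" where
  "sing_vals Q = rev (sorted_list_of_multiset
      (image_mset sqrt (proots (char_poly (transpose_mat Q * Q)))))"

definition sing_val :: "real mat \<Rightarrow> nat \<Rightarrow> real" where
  "sing_val Q k = sing_vals Q ! (k - 1)"

end

theory Submission
  imports Defs
begin

(* Write D = diag pi. Then Q = D P D^(-1/2) = X Y^T with X = D U and Y = D^(-1/2) V, so
   Q^T Q = Y G Y^T with G = X^T X = U^T D^2 U.  Comparing characteristic polynomials,
   x^r chi(Y Z) = x^p chi(Z Y), the nonzero eigenvalues of Q^T Q are those of the r x r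
   matrix G H with H = Y^T Y = V^T D^(-1) V.  The quadratic forms of G and H are bounded
   below by lambda_min(G) |v|^2 and lambda_min(H) |v|^2 (the infimum of the Rayleigh quotient
   of a symmetric matrix is an eigenvalue), and by Cauchy-Schwarz every eigenvalue of G H is at
   least lambda_min(G) lambda_min(H) >= c2^2 / p.  So Q^T Q has r eigenvalues >= c2^2 / p.
   For the upper bound, Jensen's inequality along the rows of P followed by stationarity of pi
   gives |Q x|^2 <= (max_j pi_j) |x|^2 <= (C1 / p) |x|^2. *)

lemma sqrt_le_divide_sqrt:
  fixes c C :: real
  assumes "0 < c" "c \<le> C"
  shows "sqrt C \<le> C / sqrt c"
proof -
  have "sqrt c * sqrt C \<le> sqrt C * sqrt C" using assms by (intro mult_right_mono) simp_all
  also have "\<dots> = C" using assms by simp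
  finally show ?thesis using assms by (simp add: field_simps mult.commute)
qed

lemma scalar_prod_self_nonneg: "0 \<le> (v :: real vec) \<bullet> v"
  using conjugate_square_ge_0_vec[of v] by simp

lemma scalar_prod_self_pos: "(v :: real vec) \<in> carrier_vec n \<Longrightarrow> v \<noteq> 0\<^sub>v n \<Longrightarrow> 0 < v \<bullet> v"
  using conjugate_square_greater_0_vec[of v n] by simp

lemma scalar_prod_eq_sum: "v \<in> carrier_vec n \<Longrightarrow> u \<bullet> v = (\<Sum>i<n. u $ i * v $ i)"
  unfolding scalar_prod_def by (simp add: atLeast0LessThan)

lemma Cauchy_Schwarz_sum:
  fixes f g :: "'i \<Rightarrow> 'a :: linordered_idom"
  shows "(\<Sum>i\<in>A. f i * g i)^2 \<le> (\<Sum>i\<in>A. (f i)^2) * (\<Sum>i\<in>A. (g i)^2)"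
proof -
  have "0 \<le> (\<Sum>i\<in>A. \<Sum>j\<in>A. (f i * g j - f j * g i)^2)" by (intro sum_nonneg) auto
  also have "\<dots> = (\<Sum>i\<in>A. \<Sum>j\<in>A. (f i)^2 * (g j)^2) + (\<Sum>i\<in>A. \<Sum>j\<in>A. (f j)^2 * (g i)^2)
       - 2 * (\<Sum>i\<in>A. \<Sum>j\<in>A. (f i * g i) * (f j * g j))"
    by (simp add: power2_eq_square algebra_simps sum_subtractf sum.distrib sum_distrib_left)
  also have "(\<Sum>i\<in>A. \<Sum>j\<in>A. (f j)^2 * (g i)^2) = (\<Sum>i\<in>A. \<Sum>j\<in>A. (f i)^2 * (g j)^2)"
    by (rule sum.swap)
  also have "(\<Sum>i\<in>A. \<Sum>j\<in>A. (f i)^2 * (g j)^2) = (\<Sum>i\<in>A. (f i)^2) * (\<Sum>i\<in>A. (g i)^2)"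
    by (simp add: sum_product)
  also have "(\<Sum>i\<in>A. \<Sum>j\<in>A. (f i * g i) * (f j * g j)) = (\<Sum>i\<in>A. f i * g i)^2"
    by (simp add: sum_product power2_eq_square)
  finally show ?thesis by simp
qed

lemma weighted_square_le:
  fixes w y :: "'i \<Rightarrow> real"
  assumes w: "\<And>j. j \<in> A \<Longrightarrow> 0 \<le> w j" and w1: "sum w A = 1"
  shows "(\<Sum>j\<in>A. w j * y j)^2 \<le> (\<Sum>j\<in>A. w j * (y j)^2)"
proof -
  have "(\<Sum>j\<in>A. w j * y j)^2 = (\<Sum>j\<in>A. sqrt (w j) * (sqrt (w j) * y j))^2"
    using w by (simp add: mult.assoc[symmetric])
  also have "\<dots> \<le> (\<Sum>j\<in>A. (sqrt (w j))^2) * (\<Sum>j\<in>A. (sqrt (w j) * y j)^2)"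
    by (rule Cauchy_Schwarz_sum)
  also have "\<dots> = (\<Sum>j\<in>A. w j * (y j)^2)" using w w1 by (simp add: power_mult_distrib)
  finally show ?thesis .
qed

lemma scalar_prod_Cauchy_Schwarz:
  assumes "(u :: real vec) \<in> carrier_vec n" "v \<in> carrier_vec n"
  shows "(u \<bullet> v)^2 \<le> (u \<bullet> u) * (v \<bullet> v)"
  using Cauchy_Schwarz_sum[of "\<lambda>i. u $ i" "\<lambda>i. v $ i" "{..<n}"] assms
  by (simp add: scalar_prod_eq_sum[OF assms(1)] scalar_prod_eq_sum[OF assms(2)] power2_eq_square)

section \<open>Quadratic forms and the Rayleigh quotient\<close>

definition frobenius_norm_sq :: "real mat \<Rightarrow> real" where
  "frobenius_norm_sq M = (\<Sum>i<dim_row M. \<Sum>j<dim_col M. (M $$ (i,j))^2)"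

lemma frobenius_norm_sq_nonneg: "0 \<le> frobenius_norm_sq M"
  unfolding frobenius_norm_sq_def by (intro sum_nonneg) auto

lemma mult_mat_vec_norm_sq_le:
  assumes M: "M \<in> carrier_mat m n" and x: "x \<in> carrier_vec n"
  shows "(M *\<^sub>v x) \<bullet> (M *\<^sub>v x) \<le> frobenius_norm_sq M * (x \<bullet> x)"
proof -
  have "(M *\<^sub>v x) \<bullet> (M *\<^sub>v x) = (\<Sum>i<m. (row M i \<bullet> x)^2)"
    using M x by (subst scalar_prod_eq_sum[of _ m]) (auto simp: power2_eq_square)
  also have "\<dots> \<le> (\<Sum>i<m. (row M i \<bullet> row M i) * (x \<bullet> x))"
    by (intro sum_mono scalar_prod_Cauchy_Schwarz[of _ n]) (use M x in auto)
  also have "\<dots> = frobenius_norm_sq M * (x \<bullet> x)"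
    unfolding frobenius_norm_sq_def using M
    by (simp add: sum_distrib_right scalar_prod_eq_sum[of _ n] power2_eq_square)
  finally show ?thesis .
qed

lemma quadratic_form_abs_le:
  assumes M: "M \<in> carrier_mat n n" and x: "x \<in> carrier_vec n"
  shows "\<bar>x \<bullet> (M *\<^sub>v x)\<bar> \<le> sqrt (frobenius_norm_sq M) * (x \<bullet> x)"
proof -
  have "(x \<bullet> (M *\<^sub>v x))^2 \<le> (x \<bullet> x) * ((M *\<^sub>v x) \<bullet> (M *\<^sub>v x))"
    by (rule scalar_prod_Cauchy_Schwarz[of _ n]) (use M x in auto)
  also have "\<dots> \<le> (x \<bullet> x) * (frobenius_norm_sq M * (x \<bullet> x))"
    by (intro mult_left_mono mult_mat_vec_norm_sq_le[OF M x] scalar_prod_self_nonneg)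
  also have "\<dots> = (sqrt (frobenius_norm_sq M) * (x \<bullet> x))^2"
    using frobenius_norm_sq_nonneg[of M] by (simp add: power2_eq_square)
  finally show ?thesis
    using frobenius_norm_sq_nonneg[of M] scalar_prod_self_nonneg[of x]
    by (metis abs_le_square_iff abs_of_nonneg real_sqrt_ge_zero zero_le_mult_iff)
qed

lemma psd_mult_vec_norm_sq_le:
  fixes B :: "real mat"
  assumes B: "B \<in> carrier_mat n n" and sym: "transpose_mat B = B"
    and psd: "\<And>y. y \<in> carrier_vec n \<Longrightarrow> 0 \<le> y \<bullet> (B *\<^sub>v y)"
    and L: "0 < L" "\<And>y. y \<in> carrier_vec n \<Longrightarrow> y \<bullet> (B *\<^sub>v y) \<le> L * (y \<bullet> y)"
    and x: "x \<in> carrier_vec n"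
  shows "(B *\<^sub>v x) \<bullet> (B *\<^sub>v x) \<le> L * (x \<bullet> (B *\<^sub>v x))"
proof -
  \<comment> \<open>Evaluate the nonnegative form at x - t B x with t = 1 / L.\<close>
  define w where "w = B *\<^sub>v x"
  define t where "t = 1 / L"
  have w: "w \<in> carrier_vec n" unfolding w_def using B x by simp
  have Bw: "B *\<^sub>v w \<in> carrier_vec n" using B w by simp
  have xBw: "x \<bullet> (B *\<^sub>v w) = w \<bullet> w"
    using transpose_vec_mult_scalar[OF B w x] sym w by (simp add: w_def comm_scalar_prod[of _ n])
  have "B *\<^sub>v (x - t \<cdot>\<^sub>v w) = w - t \<cdot>\<^sub>v (B *\<^sub>v w)"
    using B x w by (simp add: w_def mult_minus_distrib_mat_vec[of B n n] mult_mat_vec[of B n n])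
  hence "(x - t \<cdot>\<^sub>v w) \<bullet> (B *\<^sub>v (x - t \<cdot>\<^sub>v w))
      = x \<bullet> w - 2 * t * (w \<bullet> w) + t * t * (w \<bullet> (B *\<^sub>v w))"
    using x w Bw xBw
    by (simp add: scalar_prod_minus_distrib[of _ n] minus_scalar_prod_distrib[of _ n] algebra_simps)
  also have "\<dots> \<le> x \<bullet> w - 2 * t * (w \<bullet> w) + t * t * (L * (w \<bullet> w))"
    using L(2)[OF w] by (intro add_left_mono mult_left_mono) auto
  also have "\<dots> = x \<bullet> w - t * (w \<bullet> w)" unfolding t_def using L(1) by (simp add: field_simps)
  finally have "t * (w \<bullet> w) \<le> x \<bullet> w" using psd[of "x - t \<cdot>\<^sub>v w"] x w by simp
  thus ?thesis unfolding t_def w_def using L(1) by (simp add: field_simps)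
qed

lemma psd_invertible_coercive:
  fixes B :: "real mat"
  assumes B: "B \<in> carrier_mat n n" and sym: "transpose_mat B = B"
    and psd: "\<And>y. y \<in> carrier_vec n \<Longrightarrow> 0 \<le> y \<bullet> (B *\<^sub>v y)" and det: "det B \<noteq> 0"
  obtains \<kappa> where "0 < \<kappa>" "\<And>x. x \<in> carrier_vec n \<Longrightarrow> \<kappa> * (x \<bullet> x) \<le> x \<bullet> (B *\<^sub>v x)"
proof -
  from det_non_zero_imp_unit[OF B det, of "()"]
  obtain N where N: "N \<in> carrier_mat n n" and NB: "N * B = 1\<^sub>m n"
    unfolding Units_def ring_mat_def by auto
  define L where "L = sqrt (frobenius_norm_sq B) + 1"
  define F where "F = frobenius_norm_sq N + 1"
  have L0: "0 < L" and F0: "0 < F"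
    unfolding L_def F_def using frobenius_norm_sq_nonneg by (auto intro: add_nonneg_pos)
  have L_bound: "y \<bullet> (B *\<^sub>v y) \<le> L * (y \<bullet> y)" if y: "y \<in> carrier_vec n" for y
    using quadratic_form_abs_le[OF B y] scalar_prod_self_nonneg[of y] unfolding L_def
    by (simp add: algebra_simps abs_le_iff)
  have coercive: "1 / (F * L) * (x \<bullet> x) \<le> x \<bullet> (B *\<^sub>v x)" if x: "x \<in> carrier_vec n" for x
  proof -
    have "N *\<^sub>v (B *\<^sub>v x) = x" using N B x NB by (metis assoc_mult_mat_vec one_mult_mat_vec)
    hence "x \<bullet> x \<le> frobenius_norm_sq N * ((B *\<^sub>v x) \<bullet> (B *\<^sub>v x))"
      using mult_mat_vec_norm_sq_le[OF N, of "B *\<^sub>v x"] B x by simp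
    also have "\<dots> \<le> F * ((B *\<^sub>v x) \<bullet> (B *\<^sub>v x))"
      unfolding F_def using scalar_prod_self_nonneg by (simp add: algebra_simps)
    also have "\<dots> \<le> F * (L * (x \<bullet> (B *\<^sub>v x)))"
      using psd_mult_vec_norm_sq_le[OF B sym psd L0 L_bound x] F0 by simp
    finally show ?thesis using F0 L0 by (simp add: field_simps)
  qed
  show ?thesis by (rule that[of "1 / (F * L)"]) (use F0 L0 coercive in auto)
qed

definition rayleigh_min :: "real mat \<Rightarrow> real" where
  "rayleigh_min G = Inf ((\<lambda>x. x \<bullet> (G *\<^sub>v x)) ` {x \<in> carrier_vec (dim_col G). x \<bullet> x = 1})"

lemma rayleigh_min_le:
  assumes G: "G \<in> carrier_mat n n" and y: "y \<in> carrier_vec n"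
  shows "rayleigh_min G * (y \<bullet> y) \<le> y \<bullet> (G *\<^sub>v y)"
proof (cases "y = 0\<^sub>v n")
  case True
  then show ?thesis using G by simp
next
  case False
  define S where "S = (\<lambda>x. x \<bullet> (G *\<^sub>v x)) ` {x \<in> carrier_vec n. x \<bullet> x = 1}"
  have bdd: "bdd_below S"
  proof (rule bdd_belowI)
    fix s assume "s \<in> S"
    then obtain x where x: "x \<in> carrier_vec n" "x \<bullet> x = 1" and s: "s = x \<bullet> (G *\<^sub>v x)"
      unfolding S_def by auto
    from quadratic_form_abs_le[OF G x(1)] x(2) s
    show "- sqrt (frobenius_norm_sq G) \<le> s" by simp
  qed
  have yy: "0 < y \<bullet> y" using scalar_prod_self_pos[OF y False] .
  define z where "z = (1 / sqrt (y \<bullet> y)) \<cdot>\<^sub>v y"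
  have z: "z \<in> carrier_vec n" "z \<bullet> z = 1" unfolding z_def using y yy
    by (auto simp: real_sqrt_mult[symmetric])
  have zGz: "z \<bullet> (G *\<^sub>v z) = (y \<bullet> (G *\<^sub>v y)) / (y \<bullet> y)"
    unfolding z_def using y G yy by (simp add: mult_mat_vec[of G n n] real_sqrt_mult[symmetric])
  have "z \<bullet> (G *\<^sub>v z) \<in> S" unfolding S_def using z by blast
  hence "Inf S \<le> z \<bullet> (G *\<^sub>v z)" using bdd by (rule cInf_lower)
  moreover have "rayleigh_min G = Inf S" unfolding rayleigh_min_def S_def using G by simp
  ultimately show ?thesis unfolding zGz using yy by (simp add: pos_le_divide_eq)
qed

lemma rayleigh_min_eigenvalue:
  fixes G :: "real mat"
  assumes G: "G \<in> carrier_mat n n" and n: "0 < n" and sym: "transpose_mat G = G"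
  shows "eigenvalue G (rayleigh_min G)"
proof -
  define m where "m = rayleigh_min G"
  define B where "B = char_matrix G m"
  have B: "B \<in> carrier_mat n n" unfolding B_def using G by simp
  have Bx: "B *\<^sub>v x = G *\<^sub>v x - m \<cdot>\<^sub>v x" if x: "x \<in> carrier_vec n" for x
    unfolding B_def char_matrix_def using G x by (intro eq_vecI) (auto simp: algebra_simps)
  have symB: "transpose_mat B = B"
    unfolding B_def char_matrix_def using G sym by (subst transpose_add) auto
  have psd: "0 \<le> y \<bullet> (B *\<^sub>v y)" if y: "y \<in> carrier_vec n" for y
    using rayleigh_min_le[OF G y] y G
    by (simp add: Bx scalar_prod_minus_distrib[of _ n] m_def)
  \<comment> \<open>If B = G - m I were invertible, it would be coercive and m would not be the infimum.\<close>
  have "det B = 0"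
  proof (rule ccontr)
    assume "det B \<noteq> 0"
    then obtain \<kappa> where \<kappa>: "0 < \<kappa>" "\<And>x. x \<in> carrier_vec n \<Longrightarrow> \<kappa> * (x \<bullet> x) \<le> x \<bullet> (B *\<^sub>v x)"
      using psd_invertible_coercive[OF B symB psd] by blast
    have "m + \<kappa> \<le> rayleigh_min G"
      unfolding rayleigh_min_def
    proof (rule cInf_greatest)
      show "(\<lambda>x. x \<bullet> (G *\<^sub>v x)) ` {x \<in> carrier_vec (dim_col G). x \<bullet> x = 1} \<noteq> {}"
        using G n by (auto intro!: exI[of _ "unit_vec n 0"])
    next
      fix s assume "s \<in> (\<lambda>x. x \<bullet> (G *\<^sub>v x)) ` {x \<in> carrier_vec (dim_col G). x \<bullet> x = 1}"
      then obtain x where x: "x \<in> carrier_vec n" "x \<bullet> x = 1" and s: "s = x \<bullet> (G *\<^sub>v x)"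
        using G by auto
      show "m + \<kappa> \<le> s" using \<kappa>(2)[OF x(1)] x G
        by (simp add: s Bx scalar_prod_minus_distrib[of _ n])
    qed
    with \<kappa>(1) show False unfolding m_def by simp
  qed
  thus ?thesis unfolding m_def B_def by (simp add: eigenvalue_det[OF G])
qed

lemma lambda_min_le_rayleigh:
  fixes G :: "real mat"
  assumes G: "G \<in> carrier_mat n n" and n: "0 < n" and sym: "transpose_mat G = G"
    and x: "x \<in> carrier_vec n"
  shows "lambda_min G * (x \<bullet> x) \<le> x \<bullet> (G *\<^sub>v x)"
proof -
  have "char_poly G \<noteq> 0" using degree_monic_char_poly[OF G] by auto
  hence "finite {e. eigenvalue G e}"
    using poly_roots_finite eigenvalue_root_char_poly[OF G] by simp
  hence "lambda_min G \<le> rayleigh_min G"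
    unfolding lambda_min_def using rayleigh_min_eigenvalue[OF G n sym] by (intro Min_le) auto
  hence "lambda_min G * (x \<bullet> x) \<le> rayleigh_min G * (x \<bullet> x)"
    using scalar_prod_self_nonneg by (rule mult_right_mono)
  also have "\<dots> \<le> x \<bullet> (G *\<^sub>v x)" by (rule rayleigh_min_le[OF G x])
  finally show ?thesis .
qed

lemma quadratic_form_gram_ge:
  fixes X :: "real mat"
  assumes X: "X \<in> carrier_mat p r" and r: "0 < r"
    and c: "c \<le> lambda_min (transpose_mat X * X)" and v: "v \<in> carrier_vec r"
  shows "c * (v \<bullet> v) \<le> v \<bullet> ((transpose_mat X * X) *\<^sub>v v)"
proof -
  have "transpose_mat (transpose_mat X * X) = transpose_mat X * X"
    using X by (simp add: transpose_mult[of _ r p _ r])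
  hence "lambda_min (transpose_mat X * X) * (v \<bullet> v) \<le> v \<bullet> ((transpose_mat X * X) *\<^sub>v v)"
    using X by (intro lambda_min_le_rayleigh[OF _ r _ v]) auto
  thus ?thesis using mult_right_mono[OF c scalar_prod_self_nonneg[of v]] by linarith
qed

section \<open>Spectra of symmetric matrices and of products\<close>

lemma real_symmetric_eigenvalue_real:
  fixes A :: "real mat" and a :: complex
  assumes A: "A \<in> carrier_mat n n" and sym: "transpose_mat A = A"
    and ev: "eigenvalue (map_mat complex_of_real A) a"
  shows "cnj a = a"
proof -
  define C where "C = map_mat complex_of_real A"
  have C: "C \<in> carrier_mat n n" unfolding C_def using A by simp
  have symC: "transpose_mat C = C" unfolding C_def map_mat_transpose sym ..
  from ev obtain v where v: "v \<in> carrier_vec n" "v \<noteq> 0\<^sub>v n" "C *\<^sub>v v = a \<cdot>\<^sub>v v"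
    unfolding eigenvalue_def eigenvector_def C_def using A by auto
  have conj_Cv: "conjugate (C *\<^sub>v v) = C *\<^sub>v conjugate v"
    unfolding C_def using A v(1)
    by (intro eq_vecI) (auto simp: scalar_prod_def cnj_sum row_def)
  have "a * (v \<bullet>c v) = (C *\<^sub>v v) \<bullet>c v" using v by simp
  also have "\<dots> = v \<bullet>c (C *\<^sub>v v)"
    using transpose_vec_mult_scalar[OF C, of "conjugate v" v] symC v(1) C
    by (simp add: conj_Cv comm_scalar_prod[of _ n])
  also have "\<dots> = cnj a * (v \<bullet>c v)" using v by (simp add: conjugate_smult_vec)
  finally show ?thesis using v(1,2) by simp
qed

lemma proots_prod_linear: "proots (\<Prod>e\<leftarrow>es. [:-e,1:]) = mset (es :: 'a :: idom list)"
proof (induct es)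
  case (Cons a es)
  have "(\<Prod>e\<leftarrow>es. [:-e,1:]) \<noteq> (0 :: 'a poly)" by (auto simp: prod_list_zero_iff)
  hence "proots (\<Prod>e\<leftarrow>a # es. [:-e,1:]) = proots [:-a,1:] + proots (\<Prod>e\<leftarrow>es. [:-e,1:])"
    by (simp only: list.map prod_list.Cons, intro proots_mult) auto
  with Cons show ?case by simp
qed simp

lemma size_proots_char_poly_symmetric:
  fixes A :: "real mat"
  assumes A: "A \<in> carrier_mat n n" and sym: "transpose_mat A = A"
  shows "size (proots (char_poly A)) = n"
proof -
  interpret of_real: map_poly_inj_comm_ring_hom "complex_of_real" ..
  let ?C = "map_mat complex_of_real A"
  have C: "?C \<in> carrier_mat n n" using A by simp
  obtain as where as: "char_poly ?C = (\<Prod>a\<leftarrow>as. [:-a,1:])" "length as = n"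
    using char_poly_factorized[OF C] by blast
  have as_real: "complex_of_real (Re a) = a" if a: "a \<in> set as" for a
  proof -
    have "poly (char_poly ?C) a = 0" unfolding as(1) using linear_poly_root[OF a] .
    hence "cnj a = a"
      using real_symmetric_eigenvalue_real[OF A sym] eigenvalue_root_char_poly[OF C] by simp
    thus ?thesis by (metis Reals_cnj_iff Re_complex_of_real Reals_cases)
  qed
  define es where "es = map Re as"
  have "map_poly complex_of_real (\<Prod>e\<leftarrow>es. [:-e,1:]) = (\<Prod>e\<leftarrow>es. [:-complex_of_real e,1:])"
    by (induct es) (simp_all add: of_real.hom_mult del: mult_pCons_left)
  also have "\<dots> = char_poly ?C"
    unfolding as(1) es_def using as_real by (simp add: o_def cong: map_cong)
  also have "\<dots> = map_poly complex_of_real (char_poly A)"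
    using of_real_hom.char_poly_hom[OF A] by simp
  finally have "char_poly A = (\<Prod>e\<leftarrow>es. [:-e,1:])" by simp
  also have "proots \<dots> = mset es" by (rule proots_prod_linear)
  finally show ?thesis using as(2) unfolding es_def by simp
qed

lemma size_proots_char_poly_gram:
  fixes Q :: "real mat"
  assumes Q: "Q \<in> carrier_mat m n"
  shows "size (proots (char_poly (transpose_mat Q * Q))) = n"
  using Q by (intro size_proots_char_poly_symmetric) (auto simp: transpose_mult[of _ n m _ n])

lemma char_poly_mult_commute:
  fixes Y :: "'a :: idom mat"
  assumes Y: "Y \<in> carrier_mat p r" and Z: "Z \<in> carrier_mat r p"
  shows "[:0,1:]^r * char_poly (Y * Z) = [:0,1:]^p * char_poly (Z * Y)"
proof -
  define c :: "'a mat \<Rightarrow> 'a poly mat" where "c = map_mat (\<lambda>a. [:a:])"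
  define x :: "'a poly" where "x = [:0,1:]"
  have cpm: "char_poly_matrix M = x \<cdot>\<^sub>m 1\<^sub>m n - c M" if "M \<in> carrier_mat n n" for M n
    unfolding char_poly_matrix_def x_def c_def using that by (intro eq_matI) auto
  have cY: "c Y \<in> carrier_mat p r" and cZ: "c Z \<in> carrier_mat r p" unfolding c_def using Y Z by auto
  have YZ: "c Y * c Z = c (Y * Z)" and ZY: "c Z * c Y = c (Z * Y)"
    unfolding c_def using Y Z by (auto simp: map_poly_mult)
  \<comment> \<open>Two block-triangular factorisations of the same block matrix L.\<close>
  define L where "L = four_block_mat (x \<cdot>\<^sub>m 1\<^sub>m p) (c Y) (c Z) (1\<^sub>m r)"
  define R1 where "R1 = four_block_mat (1\<^sub>m p) (0\<^sub>m p r) (- c Z) (1\<^sub>m r)"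
  define R2 where "R2 = four_block_mat (1\<^sub>m p) (0\<^sub>m p r) (- c Z) (x \<cdot>\<^sub>m 1\<^sub>m r)"
  have L: "L \<in> carrier_mat (p + r) (p + r)" and R1: "R1 \<in> carrier_mat (p + r) (p + r)"
    and R2: "R2 \<in> carrier_mat (p + r) (p + r)" unfolding L_def R1_def R2_def by auto
  have YZc: "Y * Z \<in> carrier_mat p p" and ZYc: "Z * Y \<in> carrier_mat r r" using Y Z by auto
  have LR1: "L * R1 = four_block_mat (char_poly_matrix (Y * Z)) (c Y) (0\<^sub>m r p) (1\<^sub>m r)"
    unfolding L_def R1_def using cY cZ
    by (subst mult_four_block_mat[of _ p p _ r _ r _ _ p _ r]) (auto simp: cpm[OF YZc] YZ[symmetric])
  have R2L: "R2 * L = four_block_mat (x \<cdot>\<^sub>m 1\<^sub>m p) (c Y) (0\<^sub>m r p) (char_poly_matrix (Z * Y))"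
    unfolding L_def R2_def using cY cZ
    by (subst mult_four_block_mat[of _ p p _ r _ r _ _ p _ r])
      (auto simp: cpm[OF ZYc] ZY[symmetric] mult_smult_distrib[of _ r p _ p]
        mult_smult_assoc_mat[of _ r r _ p])
  have "det L = char_poly (Y * Z)"
  proof -
    have "det R1 = 1" unfolding R1_def
      by (subst det_four_block_mat_upper_right_zero[of _ p _ r]) (use cZ in auto)
    hence "det L = det (L * R1)" using det_mult[OF L R1] by simp
    also have "\<dots> = char_poly (Y * Z)" unfolding LR1 char_poly_def
      by (subst det_four_block_mat_lower_left_zero[of _ p _ r]) (use cY YZc in auto)
    finally show ?thesis .
  qed
  moreover have "det R2 = x ^ r" unfolding R2_def
    by (subst det_four_block_mat_upper_right_zero[of _ p _ r]) (use cZ in auto)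
  hence "x ^ r * det L = det (R2 * L)" using det_mult[OF R2 L] by simp
  moreover have "det (R2 * L) = x ^ p * char_poly (Z * Y)" unfolding R2L char_poly_def
    by (subst det_four_block_mat_lower_left_zero[of _ p _ r]) (use cY ZYc in auto)
  ultimately show ?thesis unfolding x_def by simp
qed

lemma proots_char_poly_mult_commute:
  fixes Y :: "'a :: idom mat"
  assumes Y: "Y \<in> carrier_mat p r" and Z: "Z \<in> carrier_mat r p"
    and nonsing: "poly (char_poly (Z * Y)) 0 \<noteq> 0"
  shows "r \<le> p"
    and "proots (char_poly (Y * Z)) = repeat_mset (p - r) {#0#} + proots (char_poly (Z * Y))"
proof -
  let ?x = "[:0,1:] :: 'a poly"
  note syl = char_poly_mult_commute[OF Y Z]
  show rp: "r \<le> p"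
  proof (rule ccontr)
    assume "\<not> r \<le> p"
    hence "?x^p * (?x^(r - p) * char_poly (Y * Z)) = ?x^p * char_poly (Z * Y)"
      using syl by (metis power_add mult.assoc le_add_diff_inverse nat_le_linear)
    hence "char_poly (Z * Y) = ?x^(r - p) * char_poly (Y * Z)" by simp
    thus False using nonsing \<open>\<not> r \<le> p\<close> by simp
  qed
  have "?x^r * char_poly (Y * Z) = ?x^r * (?x^(p - r) * char_poly (Z * Y))"
    using syl rp by (metis power_add mult.assoc le_add_diff_inverse)
  hence "char_poly (Y * Z) = ?x^(p - r) * char_poly (Z * Y)" by simp
  moreover have "char_poly (Z * Y) \<noteq> 0" using nonsing by auto
  ultimately show "proots (char_poly (Y * Z)) = repeat_mset (p - r) {#0#} + proots (char_poly (Z * Y))"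
    by (simp add: proots_mult proots_power)
qed

lemma eigenvalue_mult_ge:
  fixes G H :: "real mat"
  assumes G: "G \<in> carrier_mat n n" and H: "H \<in> carrier_mat n n"
    and a: "0 \<le> a" "\<And>v. v \<in> carrier_vec n \<Longrightarrow> a * (v \<bullet> v) \<le> v \<bullet> (G *\<^sub>v v)"
    and b: "0 < b" "\<And>v. v \<in> carrier_vec n \<Longrightarrow> b * (v \<bullet> v) \<le> v \<bullet> (H *\<^sub>v v)"
    and ev: "eigenvalue (G * H) e"
  shows "a * b \<le> e"
proof -
  obtain v where v: "v \<in> carrier_vec n" "v \<noteq> 0\<^sub>v n" "(G * H) *\<^sub>v v = e \<cdot>\<^sub>v v"
    using ev G H unfolding eigenvalue_def eigenvector_def by auto
  define w where "w = H *\<^sub>v v"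
  have w: "w \<in> carrier_vec n" unfolding w_def using H v by simp
  have vv: "0 < v \<bullet> v" using scalar_prod_self_pos[OF v(1,2)] .
  have "b * (v \<bullet> v) \<le> v \<bullet> w" unfolding w_def by (rule b(2)[OF v(1)])
  hence vw: "0 < v \<bullet> w" using vv b(1) by (meson mult_pos_pos order_less_le_trans)
  have "(v \<bullet> w) * (b * (v \<bullet> v)) \<le> (v \<bullet> w) * (v \<bullet> w)"
    using \<open>b * (v \<bullet> v) \<le> v \<bullet> w\<close> vw by simp
  also have "\<dots> \<le> (v \<bullet> v) * (w \<bullet> w)"
    using scalar_prod_Cauchy_Schwarz[OF v(1) w] by (simp add: power2_eq_square)
  finally have "b * (v \<bullet> w) \<le> w \<bullet> w" using vv by (simp add: algebra_simps)
  hence "a * (b * (v \<bullet> w)) \<le> a * (w \<bullet> w)" using a(1) by (rule mult_left_mono)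
  also have "\<dots> \<le> w \<bullet> (G *\<^sub>v w)" by (rule a(2)[OF w])
  also have "G *\<^sub>v w = e \<cdot>\<^sub>v v" unfolding w_def using v G H by simp
  also have "w \<bullet> (e \<cdot>\<^sub>v v) = e * (v \<bullet> w)" using v(1) w by (simp add: comm_scalar_prod[of _ n])
  finally show ?thesis using vw by (simp add: mult.assoc)
qed

lemma eigenvalue_gram_le:
  fixes Q :: "real mat"
  assumes Q: "Q \<in> carrier_mat m n"
    and bound: "\<And>x. x \<in> carrier_vec n \<Longrightarrow> (Q *\<^sub>v x) \<bullet> (Q *\<^sub>v x) \<le> b * (x \<bullet> x)"
    and ev: "eigenvalue (transpose_mat Q * Q) e"
  shows "e \<le> b"
proof -
  obtain x where x: "x \<in> carrier_vec n" "x \<noteq> 0\<^sub>v n" "(transpose_mat Q * Q) *\<^sub>v x = e \<cdot>\<^sub>v x"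
    using ev Q unfolding eigenvalue_def eigenvector_def by auto
  have "e * (x \<bullet> x) = x \<bullet> (transpose_mat Q *\<^sub>v (Q *\<^sub>v x))" using x Q by simp
  also have "\<dots> = (Q *\<^sub>v x) \<bullet> (Q *\<^sub>v x)"
    using transpose_vec_mult_scalar[OF Q x(1), of "Q *\<^sub>v x"] Q x(1)
    by (simp add: comm_scalar_prod[of _ n])
  also have "\<dots> \<le> b * (x \<bullet> x)" by (rule bound[OF x(1)])
  finally show ?thesis using scalar_prod_self_pos[OF x(1,2)] by simp
qed

lemma transpose_mat_diag: "transpose_mat (mat_diag n f) = mat_diag n f"
  by (intro eq_matI) (auto simp: mat_diag_def)

lemma gram_mult_transpose:
  fixes X Y :: "'a :: comm_ring_1 mat"
  assumes X: "X \<in> carrier_mat p r" and Y: "Y \<in> carrier_mat p r"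
  shows "transpose_mat (X * transpose_mat Y) * (X * transpose_mat Y)
    = Y * (transpose_mat X * X) * transpose_mat Y"
  using X Y
  by (simp add: transpose_mult[of _ p r _ p] assoc_mult_mat[of _ p r _ p _ p]
      assoc_mult_mat[of _ p r _ r _ p] assoc_mult_mat[of _ r p _ r _ p])

lemma mat_diag_mult_low_rank:
  fixes U V :: "'a :: comm_ring_1 mat"
  assumes U: "U \<in> carrier_mat n r" and V: "V \<in> carrier_mat n r"
  shows "mat_diag n f * (U * transpose_mat V) * mat_diag n g
    = (mat_diag n f * U) * transpose_mat (mat_diag n g * V)"
  using U V
  by (simp add: transpose_mult[of _ n n _ r] transpose_mat_diag assoc_mult_mat[of _ n n _ n _ n]
      assoc_mult_mat[of _ n r _ n _ n] assoc_mult_mat[of _ n n _ r _ n])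

lemma gram_mat_diag_mult:
  fixes U :: "'a :: comm_ring_1 mat"
  assumes U: "U \<in> carrier_mat n r"
  shows "transpose_mat (mat_diag n f * U) * (mat_diag n f * U)
    = transpose_mat U * mat_diag n (\<lambda>i. f i * f i) * U"
proof -
  let ?D = "mat_diag n f"
  have "transpose_mat (?D * U) * (?D * U) = transpose_mat U * ?D * (?D * U)"
    using U by (simp add: transpose_mult[of _ n n _ r] transpose_mat_diag)
  also have "\<dots> = transpose_mat U * (?D * ?D) * U"
    using U by (simp add: assoc_mult_mat[of _ r n _ n _ r, symmetric] assoc_mult_mat[of _ r n _ n _ n])
  finally show ?thesis by simp
qed

lemma index_mat_diag_mult_mat_diag:
  assumes P: "P \<in> carrier_mat n n" and i: "i < n" and j: "j < n"
  shows "(mat_diag n f * P * mat_diag n g) $$ (i,j) = f i * P $$ (i,j) * g j"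
proof -
  have "mat_diag n f * P * mat_diag n g
      = mat n n (\<lambda>(i,j). mat n n (\<lambda>(i,j). f i * P $$ (i,j)) $$ (i,j) * g j)"
    unfolding mat_diag_mult_left[OF P] by (rule mat_diag_mult_right) simp
  with i j show ?thesis by simp
qed

section \<open>Singular values\<close>

lemma rev_sorted_list_of_multiset_antimono:
  "i \<le> j \<Longrightarrow> j < size M \<Longrightarrow>
    rev (sorted_list_of_multiset M) ! j \<le> rev (sorted_list_of_multiset M) ! i"
  by (intro sorted_rev_nth_mono) (simp_all flip: size_mset)

lemma rev_sorted_list_of_multiset_nth_mem:
  "i < size M \<Longrightarrow> rev (sorted_list_of_multiset M) ! i \<in># M"
  by (metis length_rev mset_sorted_list_of_multiset nth_mem set_mset_mset set_rev size_mset)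

lemma rev_sorted_list_of_multiset_nth_ge:
  fixes M :: "'a :: linorder multiset"
  assumes k: "k < size (filter_mset (\<lambda>y. t \<le> y) M)"
  shows "t \<le> rev (sorted_list_of_multiset M) ! k"
proof (rule ccontr)
  define L where "L = rev (sorted_list_of_multiset M)"
  have mL: "mset L = M" unfolding L_def by simp
  assume "\<not> t \<le> L ! k"
  have "y < t" if "y \<in> set (drop k L)" for y
  proof -
    from that obtain i where i: "k + i < length L" "y = L ! (k + i)"
      by (metis in_set_conv_nth length_drop less_diff_conv add.commute nth_drop less_imp_le_nat
          not_le drop_all)
    have "L ! (k + i) \<le> L ! k"
      unfolding L_def by (rule rev_sorted_list_of_multiset_antimono) (use i mL in auto)
    with i \<open>\<not> t \<le> L ! k\<close> show "y < t" by simp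
  qed
  hence "filter (\<lambda>y. t \<le> y) L = filter (\<lambda>y. t \<le> y) (take k L)"
    by (metis append.right_neutral append_take_drop_id filter_append filter_False not_le)
  hence "size (filter_mset (\<lambda>y. t \<le> y) M) \<le> k"
    by (metis mL mset_filter size_mset length_filter_le length_take min.bounded_iff nle_le)
  with k show False by simp
qed

lemma sing_val_ge:
  fixes Q :: "real mat"
  assumes k: "1 \<le> k" "k \<le> size (filter_mset (\<lambda>e. t \<le> e) (proots (char_poly (transpose_mat Q * Q))))"
  shows "sqrt t \<le> sing_val Q k"
proof -
  let ?R = "proots (char_poly (transpose_mat Q * Q))"
  have "filter_mset (\<lambda>e. t \<le> e) ?R \<subseteq># filter_mset (\<lambda>e. sqrt t \<le> sqrt e) ?R"
    by (rule filter_mset_mono_strong) auto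
  hence "k - 1 < size (filter_mset (\<lambda>y. sqrt t \<le> y) (image_mset sqrt ?R))"
    using k size_mset_mono by (fastforce simp: filter_mset_image_mset)
  thus ?thesis unfolding sing_val_def sing_vals_def by (rule rev_sorted_list_of_multiset_nth_ge)
qed

lemma sing_val_antimono:
  fixes Q :: "real mat"
  assumes Q: "Q \<in> carrier_mat m n" and jk: "1 \<le> j" "j \<le> k" "k \<le> n"
  shows "sing_val Q k \<le> sing_val Q j"
  unfolding sing_val_def sing_vals_def
  by (rule rev_sorted_list_of_multiset_antimono) (use jk size_proots_char_poly_gram[OF Q] in auto)

lemma sing_val_le:
  fixes Q :: "real mat"
  assumes Q: "Q \<in> carrier_mat m n" and k: "1 \<le> k" "k \<le> n"
    and bound: "\<And>x. x \<in> carrier_vec n \<Longrightarrow> (Q *\<^sub>v x) \<bullet> (Q *\<^sub>v x) \<le> b * (x \<bullet> x)"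
  shows "sing_val Q k \<le> sqrt b"
proof -
  let ?R = "proots (char_poly (transpose_mat Q * Q))"
  have "sing_val Q k \<in># image_mset sqrt ?R"
    unfolding sing_val_def sing_vals_def
    by (rule rev_sorted_list_of_multiset_nth_mem) (use k size_proots_char_poly_gram[OF Q] in auto)
  then obtain e where e: "e \<in># ?R" "sing_val Q k = sqrt e" by auto
  have QQ: "transpose_mat Q * Q \<in> carrier_mat n n" using Q by simp
  have "char_poly (transpose_mat Q * Q) \<noteq> 0" using degree_monic_char_poly[OF QQ] by auto
  with e(1) have "eigenvalue (transpose_mat Q * Q) e"
    using eigenvalue_root_char_poly[OF QQ] by simp
  hence "e \<le> b" using eigenvalue_gram_le[OF Q bound] by blast
  thus ?thesis unfolding e(2) by simp
qed

lemma sing_val_low_rank_ge: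
  fixes X Y :: "real mat"
  assumes X: "X \<in> carrier_mat p r" and Y: "Y \<in> carrier_mat p r" and r: "1 \<le> r"
    and a: "0 < a" "\<And>v. v \<in> carrier_vec r \<Longrightarrow> a * (v \<bullet> v) \<le> v \<bullet> ((transpose_mat X * X) *\<^sub>v v)"
    and b: "0 < b" "\<And>v. v \<in> carrier_vec r \<Longrightarrow> b * (v \<bullet> v) \<le> v \<bullet> ((transpose_mat Y * Y) *\<^sub>v v)"
  shows "r \<le> p" and "sqrt (a * b) \<le> sing_val (X * transpose_mat Y) r"
proof -
  define G where "G = transpose_mat X * X"
  define H where "H = transpose_mat Y * Y"
  define Z where "Z = G * transpose_mat Y"
  have G: "G \<in> carrier_mat r r" and H: "H \<in> carrier_mat r r" and Z: "Z \<in> carrier_mat r p"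
    unfolding G_def H_def Z_def using X Y by auto
  have QQ: "transpose_mat (X * transpose_mat Y) * (X * transpose_mat Y) = Y * Z"
    unfolding Z_def G_def using gram_mult_transpose[OF X Y] X Y
    by (simp add: assoc_mult_mat[of _ p r _ r _ p])
  have ZY: "Z * Y = G * H"
    unfolding Z_def H_def using G Y by (simp add: assoc_mult_mat[of _ r r _ p _ r])
  have GH: "G * H \<in> carrier_mat r r" using G H by simp
  have cp: "char_poly (G * H) \<noteq> 0" using degree_monic_char_poly[OF GH] by auto
  have roots: "a * b \<le> e" if "e \<in># proots (char_poly (G * H))" for e
  proof -
    from that cp have ev: "eigenvalue (G * H) e" using eigenvalue_root_char_poly[OF GH] by simp
    show ?thesis
      by (rule eigenvalue_mult_ge[OF G H less_imp_le[OF a(1)] _ b(1) _ ev])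
        (use a(2) b(2) in \<open>simp_all add: G_def H_def\<close>)
  qed
  have nonsing: "poly (char_poly (Z * Y)) 0 \<noteq> 0"
  proof
    assume "poly (char_poly (Z * Y)) 0 = 0"
    hence "0 \<in># proots (char_poly (G * H))" using cp ZY by simp
    with roots have "a * b \<le> 0" by blast
    with a(1) b(1) show False by (simp add: mult_le_0_iff)
  qed
  note split = proots_char_poly_mult_commute[OF Y Z nonsing]
  show "r \<le> p" by (fact split(1))
  have "size (proots (char_poly (G * H))) = r"
    using arg_cong[OF split(2), of size] size_proots_char_poly_gram[of "X * transpose_mat Y" p p]
      X Y split(1) QQ ZY by simp
  moreover have "filter_mset (\<lambda>e. a * b \<le> e) (proots (char_poly (G * H))) = proots (char_poly (G * H))"
    using roots by (simp add: filter_mset_eq_conv)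
  ultimately have "r \<le> size (filter_mset (\<lambda>e. a * b \<le> e)
      (proots (char_poly (transpose_mat (X * transpose_mat Y) * (X * transpose_mat Y)))))"
    unfolding QQ split(2) ZY by simp
  thus "sqrt (a * b) \<le> sing_val (X * transpose_mat Y) r" by (rule sing_val_ge[OF r])
qed

section \<open>Stationary scaling of a stochastic matrix\<close>

lemma stationary_scaling_norm_sq_le:
  fixes P :: "real mat" and \<pi> :: "nat \<Rightarrow> real"
  assumes P: "stochastic_mat p P" and stat: "stationary_dist p P \<pi>"
    and pos: "\<And>j. j < p \<Longrightarrow> 0 < \<pi> j" and up: "\<And>j. j < p \<Longrightarrow> \<pi> j \<le> b"
    and x: "x \<in> carrier_vec p"
  defines "Q \<equiv> mat_diag p \<pi> * P * mat_diag p (\<lambda>i. 1 / sqrt (\<pi> i))"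
  shows "(Q *\<^sub>v x) \<bullet> (Q *\<^sub>v x) \<le> b * (x \<bullet> x)"
proof -
  have Pc: "P \<in> carrier_mat p p" and Pnn: "\<And>i j. i < p \<Longrightarrow> j < p \<Longrightarrow> 0 \<le> P $$ (i,j)"
    and Prow: "\<And>i. i < p \<Longrightarrow> (\<Sum>j<p. P $$ (i,j)) = 1"
    using P unfolding stochastic_mat_def by auto
  have Pstat: "\<And>j. j < p \<Longrightarrow> (\<Sum>i<p. \<pi> i * P $$ (i,j)) = \<pi> j"
    using stat unfolding stationary_dist_def by auto
  define y where "y j = x $ j / sqrt (\<pi> j)" for j
  define S where "S i = (\<Sum>j<p. P $$ (i,j) * y j)" for i
  have Q: "Q \<in> carrier_mat p p" unfolding Q_def using Pc by (metis mat_diag_dim mult_carrier_mat)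
  have Qx: "(Q *\<^sub>v x) $ i = \<pi> i * S i" if i: "i < p" for i
  proof -
    have "(Q *\<^sub>v x) $ i = (\<Sum>j<p. Q $$ (i,j) * x $ j)"
      using Q x i by (simp add: scalar_prod_eq_sum[of _ p] row_def)
    also have "\<dots> = (\<Sum>j<p. \<pi> i * (P $$ (i,j) * y j))"
      unfolding Q_def y_def using Pc i by (intro sum.cong refl) (simp add: index_mat_diag_mult_mat_diag)
    finally show ?thesis unfolding S_def by (simp add: sum_distrib_left)
  qed
  have "(Q *\<^sub>v x) \<bullet> (Q *\<^sub>v x) = (\<Sum>i<p. (Q *\<^sub>v x) $ i * (Q *\<^sub>v x) $ i)"
    by (rule scalar_prod_eq_sum) (use Q x in simp)
  also have "\<dots> = (\<Sum>i<p. (\<pi> i)^2 * (S i)^2)"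
    by (intro sum.cong refl) (auto simp del: index_mult_mat_vec simp: Qx power2_eq_square)
  also have "\<dots> \<le> (\<Sum>i<p. (b * \<pi> i) * (\<Sum>j<p. P $$ (i,j) * (y j)^2))"
  proof (intro sum_mono mult_mono)
    fix i assume "i \<in> {..<p}"
    hence i: "i < p" by simp
    show "(\<pi> i)^2 \<le> b * \<pi> i" using pos[OF i] up[OF i] by (simp add: power2_eq_square)
    show "0 \<le> b * \<pi> i" using pos[OF i] up[OF i] by simp
    show "(S i)^2 \<le> (\<Sum>j<p. P $$ (i,j) * (y j)^2)"
      unfolding S_def using Pnn[OF i] Prow[OF i] by (intro weighted_square_le) auto
  qed simp
  also have "\<dots> = b * (\<Sum>i<p. \<Sum>j<p. \<pi> i * P $$ (i,j) * (y j)^2)"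
    by (simp add: sum_distrib_left mult.assoc)
  also have "\<dots> = b * (\<Sum>j<p. \<Sum>i<p. \<pi> i * P $$ (i,j) * (y j)^2)"
    by (subst sum.swap) (rule refl)
  also have "\<dots> = b * (\<Sum>j<p. (y j)^2 * (\<Sum>i<p. \<pi> i * P $$ (i,j)))"
    by (simp add: sum_distrib_left mult.commute)
  also have "\<dots> = b * (\<Sum>j<p. (x $ j)^2)"
    using pos by (intro arg_cong[where f = "(*) b"] sum.cong)
      (auto simp: Pstat y_def power_divide less_imp_le dest: less_imp_neq[OF pos])
  also have "\<dots> = b * (x \<bullet> x)" using x by (simp add: scalar_prod_eq_sum[of _ p] power2_eq_square)
  finally show ?thesis .
qed

lemma sing_val_stationary_scaling_le:
  fixes P :: "real mat" and \<pi> :: "nat \<Rightarrow> real"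
  assumes P: "stochastic_mat p P" and stat: "stationary_dist p P \<pi>" and p: "0 < p"
    and pos: "\<And>j. j < p \<Longrightarrow> 0 < \<pi> j" and up: "\<And>j. j < p \<Longrightarrow> \<pi> j \<le> b"
  shows "sing_val (mat_diag p \<pi> * P * mat_diag p (\<lambda>i. 1 / sqrt (\<pi> i))) 1 \<le> sqrt b"
proof (rule sing_val_le)
  show "mat_diag p \<pi> * P * mat_diag p (\<lambda>i. 1 / sqrt (\<pi> i)) \<in> carrier_mat p p"
    using P unfolding stochastic_mat_def by (metis mat_diag_dim mult_carrier_mat)
qed (use stationary_scaling_norm_sq_le[OF P stat pos up] p in auto)

theorem mainTheorem6:
  fixes p r :: nat and U V P :: "real mat" and \<pi> :: "nat \<Rightarrow> real"
    and c\<^sub>1 C\<^sub>1 c\<^sub>2 :: real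
  assumes "r \<ge> 1"
    and U: "U \<in> carrier_mat p r" and V: "V \<in> carrier_mat p r"
    and U_nonneg: "\<forall>i<p. \<forall>j<r. U $$ (i,j) \<ge> 0"
    and V_nonneg: "\<forall>i<p. \<forall>j<r. V $$ (i,j) \<ge> 0"
    and U_rows: "\<forall>i<p. (\<Sum>j<r. U $$ (i,j)) = 1"
    and V_cols: "\<forall>j<r. (\<Sum>i<p. V $$ (i,j)) = 1"
    and P_def: "P = U * transpose_mat V"
    and erg: "ergodic_chain p P"
    and stat: "stationary_dist p P \<pi>"
    and cpos: "c\<^sub>1 > 0" "C\<^sub>1 > 0" "c\<^sub>2 > 0"
    and pi_bounds: "\<forall>j<p. c\<^sub>1 / real p \<le> \<pi> j \<and> \<pi> j \<le> C\<^sub>1 / real p"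
    and eigU: "lambda_min (transpose_mat U * (mat_diag p \<pi>)^\<^sub>m 2 * U)
                 \<ge> c\<^sub>2 / (real p * real r)"
    and eigV: "lambda_min (transpose_mat V * mat_diag p (\<lambda>i. 1 / \<pi> i) * V) \<ge> c\<^sub>2 * real r"
  shows "c\<^sub>2 / sqrt (real p) \<le> sing_val (mat_diag p \<pi> * P * mat_diag p (\<lambda>i. 1 / sqrt (\<pi> i))) r
       \<and> sing_val (mat_diag p \<pi> * P * mat_diag p (\<lambda>i. 1 / sqrt (\<pi> i))) r
         \<le> sing_val (mat_diag p \<pi> * P * mat_diag p (\<lambda>i. 1 / sqrt (\<pi> i))) 1
       \<and> sing_val (mat_diag p \<pi> * P * mat_diag p (\<lambda>i. 1 / sqrt (\<pi> i))) 1
         \<le> C\<^sub>1 / sqrt c\<^sub>1 / sqrt (real p)"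
proof -
  define Q where "Q = mat_diag p \<pi> * P * mat_diag p (\<lambda>i. 1 / sqrt (\<pi> i))"
  define X where "X = mat_diag p \<pi> * U"
  define Y where "Y = mat_diag p (\<lambda>i. 1 / sqrt (\<pi> i)) * V"
  have p: "0 < p" using stat unfolding stationary_dist_def by (cases p) auto
  have r: "0 < r" using \<open>r \<ge> 1\<close> by simp
  have pos: "0 < \<pi> j" if "j < p" for j
    using pi_bounds that cpos(1) p by (meson divide_pos_pos of_nat_0_less_iff order_less_le_trans)
  have X: "X \<in> carrier_mat p r" and Y: "Y \<in> carrier_mat p r"
    unfolding X_def Y_def using U V by (auto intro: mult_carrier_mat[OF mat_diag_dim])
  have Q_XY: "Q = X * transpose_mat Y"
    unfolding Q_def X_def Y_def P_def by (rule mat_diag_mult_low_rank[OF U V])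
  have "transpose_mat X * X = transpose_mat U * (mat_diag p \<pi>)^\<^sub>m 2 * U"
    unfolding X_def gram_mat_diag_mult[OF U] by (simp add: numeral_2_eq_2)
  note low_X = quadratic_form_gram_ge[OF X r eigU[folded this]]
  have "transpose_mat Y * Y = transpose_mat V * mat_diag p (\<lambda>i. 1 / \<pi> i) * V"
    unfolding Y_def gram_mat_diag_mult[OF V] using pos
    by (intro arg_cong2[where f = "\<lambda>A B. A * B * V"] refl eq_matI)
      (auto simp: mat_diag_def real_sqrt_mult[symmetric] less_imp_le)
  note low_Y = quadratic_form_gram_ge[OF Y r eigV[folded this]]
  have lower: "r \<le> p" "sqrt (c\<^sub>2 / (real p * real r) * (c\<^sub>2 * real r)) \<le> sing_val Q r"
    unfolding Q_XY using sing_val_low_rank_ge[OF X Y \<open>r \<ge> 1\<close> _ low_X _ low_Y] cpos p r by auto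
  moreover have "sqrt (c\<^sub>2 / (real p * real r) * (c\<^sub>2 * real r)) = c\<^sub>2 / sqrt (real p)"
    using cpos r by (simp add: real_sqrt_divide power2_eq_square[symmetric])
  moreover have "sing_val Q r \<le> sing_val Q 1"
    using sing_val_antimono[of Q p p 1 r] X Y lower(1) \<open>r \<ge> 1\<close> by (simp add: Q_XY)
  moreover have "sing_val Q 1 \<le> sqrt (C\<^sub>1 / real p)"
    unfolding Q_def using erg stat p pos pi_bounds unfolding ergodic_chain_def
    by (intro sing_val_stationary_scaling_le) auto
  moreover have "c\<^sub>1 \<le> C\<^sub>1"
    using pi_bounds p by (metis divide_le_cancel not_less of_nat_0_less_iff order_trans)
  hence "sqrt (C\<^sub>1 / real p) \<le> C\<^sub>1 / sqrt c\<^sub>1 / sqrt (real p)"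
    unfolding real_sqrt_divide using cpos by (intro divide_right_mono sqrt_le_divide_sqrt) auto
  ultimately show ?thesis unfolding Q_def by linarith
qed

end
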